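(* Suppose $n/N\to\lambda$ as $\nu\to\infty$ with $0\le\lambda<1$. Then $n\gamma\to c$ as $\nu\to\infty$ for some $c\ge1-\lambda>0$.
   Context: For a sequence of population sizes $N=N_\nu$ and sample sizes $n=n_\nu<N$ with $N,n\to\infty$, let $N_1,\dots,N_n$ be the group sizes of the RHC design: $N_i=N/n$ for all $i$ if $N/n$ is an integer; otherwise $N_i=\lfloor N/n\rfloor$ for $i=1,\dots,k$ and $N_i=\lfloor N/n\rfloor+1$ for $i=k+1,\dots,n$, with $k$ such that $\sum_{i=1}^nN_i=N$. Define $\gamma=\sum_{i=1}^nN_i(N_i-1)/(N(N-1))$. *)

theory Defs
  imports Complex_Main
begin

text \<open>RHC design: population of size N split into n groups. The number k of groups of
  size floor(N/n) is determined by the requirement that the sizes sum to N, namely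
  k = n - (N mod n); if n divides N then k = n and all groups have size N/n.\<close>

definition rhc_k :: "nat \<Rightarrow> nat \<Rightarrow> nat" where
  "rhc_k N n = n - N mod n"

definition rhc_group_size :: "nat \<Rightarrow> nat \<Rightarrow> nat \<Rightarrow> nat" where
  "rhc_group_size N n i = (if i \<le> rhc_k N n then N div n else N div n + 1)"

definition rhc_gamma :: "nat \<Rightarrow> nat \<Rightarrow> real" where
  "rhc_gamma N n =
     (\<Sum>i=1..n. real (rhc_group_size N n i) * (real (rhc_group_size N n i) - 1))
     / (real N * (real N - 1))"

end

theory Submission
  imports Defs "HOL-Real_Asymp.Real_Asymp"
begin

text \<open>With \<open>q = N div n\<close> and \<open>r = N mod n\<close> one has
  \<open>\<Sum>i. N\<^sub>i (N\<^sub>i - 1) = N\<^sup>2 / n - N + n t (1 - t)\<close> with \<open>t = r / n = frac (N / n)\<close>, hence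
  \<open>n \<gamma> = N / (N - 1) \<cdot> (1 - y + y\<^sup>2 \<phi> (1 / y))\<close> for \<open>y = n / N\<close> and
  \<open>\<phi> x = frac x (1 - frac x)\<close>. Although \<open>frac\<close> jumps at the integers, \<open>\<phi>\<close> vanishes
  there and is continuous; and \<open>y\<^sup>2 \<phi> (1 / y)\<close> is bounded by \<open>y\<^sup>2\<close>, so it extends
  continuously to \<open>y = 0\<close>. Hence \<open>n \<gamma>\<close> tends to \<open>1 - \<lambda> + \<lambda>\<^sup>2 \<phi> (1 / \<lambda>) \<ge> 1 - \<lambda>\<close>.\<close>

definition frac_bump :: "real \<Rightarrow> real" where
  "frac_bump x = frac x * (1 - frac x)"

lemma frac_bump_nonneg: "0 \<le> frac_bump x"
  unfolding frac_bump_def using frac_lt_1[of x] frac_ge_0[of x] by simp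

lemma frac_bump_le_1: "frac_bump x \<le> 1"
  unfolding frac_bump_def using frac_lt_1[of x] frac_ge_0[of x] by (simp add: mult_le_one)

lemma frac_bump_le_dist_int: "frac_bump x \<le> \<bar>x - of_int m\<bar>"
proof (cases "m \<le> floor x")
  case True
  have "frac_bump x \<le> frac x"
    unfolding frac_bump_def using frac_ge_0[of x] frac_lt_1[of x] by (simp add: mult_left_le)
  also have "\<dots> \<le> x - of_int m" using True unfolding frac_def by linarith
  finally show ?thesis by linarith
next
  case False
  have "frac_bump x \<le> 1 - frac x"
    unfolding frac_bump_def using frac_ge_0[of x] frac_lt_1[of x] by (simp add: mult_left_le_one_le)
  also have "\<dots> \<le> of_int m - x" using False unfolding frac_def by linarith
  finally show ?thesis by linarith
qed

lemma isCont_frac_bump: "isCont frac_bump x"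
proof (cases "x \<in> \<int>")
  case False
  then show ?thesis
    unfolding frac_bump_def by (intro continuous_intros continuous_frac)
next
  case True
  then obtain m where m: "x = of_int m" by (auto elim: Ints_cases)
  have "((\<lambda>y. \<bar>y - x\<bar>) \<longlongrightarrow> \<bar>x - x\<bar>) (at x)"
    by (intro tendsto_intros)
  then have dist_lim: "((\<lambda>y. \<bar>y - x\<bar>) \<longlongrightarrow> 0) (at x)" by simp
  have "(frac_bump \<longlongrightarrow> 0) (at x)"
    by (rule tendsto_sandwich[OF _ _ tendsto_const dist_lim])
       (use frac_bump_nonneg frac_bump_le_dist_int[of _ m] m in auto)
  moreover have "frac_bump x = 0" unfolding frac_bump_def m by simp
  ultimately show ?thesis unfolding isCont_def by simp
qed

text \<open>Since \<open>inverse 0 = 0\<close>, the value at \<open>0\<close> is \<open>0\<close>, the continuous extension.\<close>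

definition scaled_frac_bump :: "real \<Rightarrow> real" where
  "scaled_frac_bump y = y\<^sup>2 * frac_bump (inverse y)"

lemma scaled_frac_bump_nonneg: "0 \<le> scaled_frac_bump y"
  unfolding scaled_frac_bump_def using frac_bump_nonneg by simp

lemma isCont_scaled_frac_bump: "isCont scaled_frac_bump y"
proof (cases "y = 0")
  case False
  then have "isCont (\<lambda>z. frac_bump (inverse z)) y"
    by (intro isCont_o2[OF _ isCont_frac_bump] continuous_at_within_inverse continuous_ident)
  then show ?thesis
    unfolding scaled_frac_bump_def by (intro continuous_mult continuous_power continuous_ident)
next
  case True
  have square_lim: "((\<lambda>z. z\<^sup>2) \<longlongrightarrow> 0) (at (0::real))"
    using tendsto_power[OF tendsto_ident_at[of "0::real" UNIV], of 2] by simp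
  have "scaled_frac_bump z \<le> z\<^sup>2" for z
    unfolding scaled_frac_bump_def using frac_bump_le_1 by (simp add: mult_left_le)
  then have "(scaled_frac_bump \<longlongrightarrow> 0) (at 0)"
    by (intro tendsto_sandwich[OF _ _ tendsto_const square_lim] always_eventually allI)
       (simp_all add: scaled_frac_bump_nonneg)
  then show ?thesis using True unfolding isCont_def scaled_frac_bump_def by simp
qed

lemma sum_threshold_split:
  fixes a b :: "'a::comm_semiring_1"
  assumes "k \<le> n"
  shows "(\<Sum>i=1..n. if i \<le> k then a else b) = of_nat k * a + of_nat (n - k) * b"
proof -
  have "{1..n} \<inter> {i. i \<le> k} = {1..k}" "{1..n} \<inter> - {i. i \<le> k} = {k<..n}"
    using assms by auto
  then show ?thesis by (simp add: sum.If_cases)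
qed

lemma rhc_group_pairs_sum:
  assumes "0 < n"
  shows "(\<Sum>i=1..n. real (rhc_group_size N n i) * (real (rhc_group_size N n i) - 1))
    = (real N)\<^sup>2 / real n - real N + real n * frac_bump (real N / real n)"
proof -
  define q r where "q = N div n" and "r = N mod n"
  have "r < n" using assms unfolding r_def by simp
  have N_eq: "real N = real n * real q + real r"
    unfolding q_def r_def by (metis div_mult_mod_eq of_nat_add of_nat_mult mult.commute)
  have frac_eq: "frac (real N / real n) = real r / real n"
    unfolding frac_unique_iff using assms \<open>r < n\<close>
    by (auto simp: N_eq add_divide_distrib)
  then have bump: "real n * frac_bump (real N / real n) = real r - (real r)\<^sup>2 / real n"
    unfolding frac_bump_def frac_eq using assms by (simp add: field_simps power2_eq_square)
  have "(\<Sum>i=1..n. real (rhc_group_size N n i) * (real (rhc_group_size N n i) - 1))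
      = (\<Sum>i=1..n. if i \<le> n - r then real q * (real q - 1) else (real q + 1) * real q)"
    by (rule sum.cong) (auto simp: rhc_group_size_def rhc_k_def q_def r_def)
  also have "\<dots> = real (n - r) * (real q * (real q - 1)) + real r * ((real q + 1) * real q)"
    using \<open>r < n\<close> by (subst sum_threshold_split) simp_all
  also have "\<dots> = (real N)\<^sup>2 / real n - real N + real n * frac_bump (real N / real n)"
  proof -
    have "(real n * real q + real r)\<^sup>2 / real n
        = real n * (real q)\<^sup>2 + 2 * real q * real r + (real r)\<^sup>2 / real n"
      using assms by (simp add: power2_eq_square add_divide_distrib algebra_simps)
    then show ?thesis
      unfolding bump unfolding N_eq of_nat_diff[OF less_imp_le[OF \<open>r < n\<close>]]
      by (simp add: algebra_simps power2_eq_square)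
  qed
  finally show ?thesis .
qed

lemma n_mult_rhc_gamma:
  assumes "0 < n" "n < N"
  shows "real n * rhc_gamma N n
    = real N / (real N - 1) * (1 - real n / real N + scaled_frac_bump (real n / real N))"
proof -
  have "real N - 1 \<noteq> 0" "real N \<noteq> 0" "real n \<noteq> 0" using assms by auto
  then show ?thesis
    unfolding rhc_gamma_def rhc_group_pairs_sum[OF \<open>0 < n\<close>] scaled_frac_bump_def inverse_divide
    by (simp add: field_simps power2_eq_square)
qed

theorem lemma2:
  fixes N n :: "nat \<Rightarrow> nat" and lam :: real
  assumes "\<And>\<nu>. n \<nu> < N \<nu>"
    and "filterlim N at_top sequentially"
    and "filterlim n at_top sequentially"
    and "(\<lambda>\<nu>. real (n \<nu>) / real (N \<nu>)) \<longlonglongrightarrow> lam"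
    and "0 \<le> lam" and "lam < 1"
  shows "\<exists>c. c \<ge> 1 - lam \<and> 1 - lam > 0 \<and>
           (\<lambda>\<nu>. real (n \<nu>) * rhc_gamma (N \<nu>) (n \<nu>)) \<longlonglongrightarrow> c"
proof -
  define y where "y \<nu> = real (n \<nu>) / real (N \<nu>)" for \<nu>
  have "((\<lambda>x::real. x / (x - 1)) \<longlongrightarrow> 1) at_top" by real_asymp
  then have ratio: "(\<lambda>\<nu>. real (N \<nu>) / (real (N \<nu>) - 1)) \<longlonglongrightarrow> 1"
    using filterlim_compose[OF _ filterlim_compose[OF filterlim_real_sequentially assms(2)]]
    by blast
  have "(\<lambda>\<nu>. 1 - y \<nu> + scaled_frac_bump (y \<nu>)) \<longlonglongrightarrow> 1 - lam + scaled_frac_bump lam"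
    using assms(4) unfolding y_def[abs_def]
    by (intro tendsto_intros isCont_tendsto_compose[OF isCont_scaled_frac_bump])
  from tendsto_mult[OF ratio this]
  have "(\<lambda>\<nu>. real (N \<nu>) / (real (N \<nu>) - 1) * (1 - y \<nu> + scaled_frac_bump (y \<nu>)))
      \<longlonglongrightarrow> 1 - lam + scaled_frac_bump lam" by simp
  moreover have "\<forall>\<^sub>F \<nu> in sequentially. 1 \<le> n \<nu>"
    using assms(3) by (simp add: filterlim_at_top)
  then have "\<forall>\<^sub>F \<nu> in sequentially.
      real (N \<nu>) / (real (N \<nu>) - 1) * (1 - y \<nu> + scaled_frac_bump (y \<nu>))
      = real (n \<nu>) * rhc_gamma (N \<nu>) (n \<nu>)"
    by eventually_elim (simp add: y_def n_mult_rhc_gamma assms(1) Suc_le_eq)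
  ultimately have
    "(\<lambda>\<nu>. real (n \<nu>) * rhc_gamma (N \<nu>) (n \<nu>)) \<longlonglongrightarrow> 1 - lam + scaled_frac_bump lam"
    by (rule Lim_transform_eventually)
  then show ?thesis
    using scaled_frac_bump_nonneg[of lam] assms(6)
    by (intro exI[of _ "1 - lam + scaled_frac_bump lam"]) simp
qed

end
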